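(* Let $p$ be an odd prime, $d \geqslant 2$, and $V$ a $d$-dimensional vector space over $\mathbb{F}_p$ with basis $\mathbf{b}_1,\ldots,\mathbf{b}_d$. Let $G = \mathrm{Sym}(V)$, $H = \mathrm{AGL}(V)$, and let $T$ be the subgroup of $\mathrm{GL}(V)$ of all matrices that are diagonal with respect to $\mathbf{b}_1,\ldots,\mathbf{b}_d$. Let $l_1 = d(d+1)/2 - 1$. Then there exist subgroups $K_1,\ldots,K_{l_1}$ of $\mathrm{GL}(V)$, each the setwise stabiliser in $\mathrm{GL}(V)$ of a linear subspace of $V$, such that \[ G > H > K_1 > K_1 \cap K_2 > \cdots > \bigcap_{i=1}^{l_1} K_i = T. \]
   Context: $\mathrm{AGL}(V)$ is the group of invertible affine transformations $\mathbf{v} \mapsto \mathbf{v}g + \mathbf{u}$ ($g \in \mathrm{GL}(V)$, $\mathbf{u} \in V$) of $V$, regarded as a subgroup of $\mathrm{Sym}(V)$. All inclusions $>$ are strict. *)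

theory Defs
  imports "HOL-Analysis.Finite_Cartesian_Product" "Berlekamp_Zassenhaus.Finite_Field"
begin

text \<open>V = F_p^d is the type ('p mod_ring, 'n) vec with p = CARD('p), d = CARD('n);
  the basis b_1..b_d is the standard basis axis i 1. Groups are sets of maps V \<Rightarrow> V
  under composition.\<close>

definition Sym_V :: "(('p::prime_card mod_ring ^ 'n) \<Rightarrow> ('p mod_ring ^ 'n)) set" where
  "Sym_V = {f. bij f}"

definition lin_map :: "(('p::prime_card mod_ring ^ 'n) \<Rightarrow> ('p mod_ring ^ 'n)) \<Rightarrow> bool" where
  "lin_map f \<longleftrightarrow> (\<forall>x y. f (x + y) = f x + f y) \<and> (\<forall>c x. f (c *s x) = c *s f x)"

definition GL_V :: "(('p::prime_card mod_ring ^ 'n) \<Rightarrow> ('p mod_ring ^ 'n)) set" where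
  "GL_V = {f. bij f \<and> lin_map f}"

definition AGL_V :: "(('p::prime_card mod_ring ^ 'n) \<Rightarrow> ('p mod_ring ^ 'n)) set" where
  "AGL_V = {(\<lambda>v. g v + u) | g u. g \<in> GL_V}"

definition diag_T :: "(('p::prime_card mod_ring ^ 'n) \<Rightarrow> ('p mod_ring ^ 'n)) set" where
  "diag_T = {g \<in> GL_V. \<forall>i. \<exists>c. g (axis i 1) = c *s axis i 1}"

definition lin_subspace :: "('p::prime_card mod_ring ^ 'n) set \<Rightarrow> bool" where
  "lin_subspace W \<longleftrightarrow> 0 \<in> W \<and> (\<forall>x\<in>W. \<forall>y\<in>W. x + y \<in> W) \<and> (\<forall>c. \<forall>x\<in>W. c *s x \<in> W)"

definition setstab_GL :: "('p::prime_card mod_ring ^ 'n) set \<Rightarrow> (('p mod_ring ^ 'n) \<Rightarrow> ('p mod_ring ^ 'n)) set" where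
  "setstab_GL W = {g \<in> GL_V. g ` W = W}"

end

theory Submission
  imports Defs "HOL-Analysis.Cartesian_Space" "HOL-Combinatorics.Transposition"
begin

(* For a set A of coordinates let W_A be the span of the b_j with j in A. An invertible g
   stabilises W_A iff the b_k-coefficient of g b_j vanishes whenever j is in A and k is not,
   so an intersection of such stabilisers is the group of invertible matrices with a
   prescribed zero pattern: the union of the sets A x -A. If A_(j+1) separates a pair (a, b)
   (a in A_(j+1), b not) that no earlier A_i separates, the transvection x -> x + x_a b_b lies
   in the j-th intersection but not in the next one; once every pair a ~= b is separated,
   only the diagonal matrices are left.
   Numbering the coordinates 0, ..., d-1, the initial segments {0..m} (m < d-1) separate
   (m, m+1) for the first time, and then the punctured segments {0..j} - {k} (k < j, in
   lexicographic order) separate (j, k) for the first time: (d-1) + d(d-1)/2 = d(d+1)/2 - 1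
   subspaces in all.
   The transposition of b_1 and b_2 is not affine: it fixes 0, so it would be linear, but it
   fixes 2 b_1 instead of mapping it to 2 b_2, which differs from 2 b_1 as p is odd. *)

fun punctured_segments :: "nat \<Rightarrow> nat set list" where
  "punctured_segments 0 = []"
| "punctured_segments (Suc d) = punctured_segments d @ map (\<lambda>k. {..d} - {k}) [0..<d]"

definition segment_chain :: "nat \<Rightarrow> nat set list" where
  "segment_chain d = map (\<lambda>m. {..m}) [0..<d - 1] @ punctured_segments d"

lemma length_punctured_segments: "length (punctured_segments d) = d * (d - 1) div 2"
proof (induction d)
  case (Suc d)
  then show ?case by (cases d) (auto simp: algebra_simps)
qed simp

lemma punctured_segments_subset: "S \<in> set (punctured_segments d) \<Longrightarrow> S \<subseteq> {..<d}"
  by (induction d arbitrary: S) (auto simp: subset_iff less_Suc_eq)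

lemma punctured_segments_nth_fresh:
  assumes "r < length (punctured_segments d)"
  shows "\<exists>j k. k < j \<and> j < d \<and> punctured_segments d ! r = {..j} - {k} \<and>
    (\<forall>r'<r. j \<in> punctured_segments d ! r' \<longrightarrow> k \<in> punctured_segments d ! r')"
  using assms
proof (induction d arbitrary: r)
  case (Suc d)
  let ?P = "punctured_segments d" and ?P' = "punctured_segments (Suc d)"
  show ?case
  proof (cases "r < length ?P")
    case True
    then have prefix: "?P' ! r' = ?P ! r'" if "r' \<le> r" for r'
      using that by (simp add: nth_append)
    from True Suc.IH obtain j k where "k < j" "j < d" "?P ! r = {..j} - {k}"
      "\<forall>r'<r. j \<in> ?P ! r' \<longrightarrow> k \<in> ?P ! r'"
      by blast
    with prefix have "k < j \<and> j < Suc d \<and> ?P' ! r = {..j} - {k} \<and>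
      (\<forall>r'<r. j \<in> ?P' ! r' \<longrightarrow> k \<in> ?P' ! r')"
      by simp
    then show ?thesis by blast
  next
    case False
    define k where "k = r - length ?P"
    have k: "k < d" "r = length ?P + k" using Suc.prems False by (auto simp: k_def)
    have "k \<in> ?P' ! r'" if "r' < r" "d \<in> ?P' ! r'" for r'
    proof (cases "r' < length ?P")
      case True
      then have "?P' ! r' \<in> set ?P" by (simp add: nth_append)
      with punctured_segments_subset that(2) show ?thesis by fastforce
    next
      case False
      with that(1) k have "?P' ! r' = {..d} - {r' - length ?P}" by (auto simp: nth_append)
      with that(1) k False show ?thesis by auto
    qed
    with k show ?thesis by (intro exI[of _ d] exI[of _ k]) (auto simp: nth_append)
  qed
qed simp

lemma punctured_segments_separate:
  "k < j \<Longrightarrow> j < d \<Longrightarrow>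
    \<exists>r<length (punctured_segments d). j \<in> punctured_segments d ! r \<and> k \<notin> punctured_segments d ! r"
proof (induction d)
  case (Suc d)
  show ?case
  proof (cases "j < d")
    case True
    with Suc obtain r where "r < length (punctured_segments d)"
      "j \<in> punctured_segments d ! r" "k \<notin> punctured_segments d ! r"
      by blast
    then show ?thesis by (intro exI[of _ r]) (auto simp: nth_append)
  next
    case False
    with Suc.prems show ?thesis
      by (intro exI[of _ "length (punctured_segments d) + k"]) (auto simp: nth_append)
  qed
qed simp

lemma length_segment_chain: "1 \<le> d \<Longrightarrow> length (segment_chain d) = d * (d + 1) div 2 - 1"
proof -
  assume "1 \<le> d"
  then have "d * (d + 1) = 2 * (d - 1) + d * (d - 1) + 2"
    by (cases d) (auto simp: algebra_simps)
  then show ?thesis by (simp add: segment_chain_def length_punctured_segments)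
qed

lemma segment_chain_fresh:
  assumes "0 < i" "i < length (segment_chain d)"
  shows "\<exists>a<d. \<exists>b<d. a \<in> segment_chain d ! i \<and> b \<notin> segment_chain d ! i \<and>
    (\<forall>i'<i. a \<in> segment_chain d ! i' \<longrightarrow> b \<in> segment_chain d ! i')"
proof (cases "i < d - 1")
  case True
  then show ?thesis
    by (intro exI[of _ i] conjI exI[of _ "Suc i"]) (auto simp: segment_chain_def nth_append)
next
  case False
  define r where "r = i - (d - 1)"
  have r: "r < length (punctured_segments d)" "i = (d - 1) + r"
    using assms False by (auto simp: r_def segment_chain_def)
  from punctured_segments_nth_fresh[OF r(1)] obtain j k where jk: "k < j" "j < d"
    "punctured_segments d ! r = {..j} - {k}"
    "\<forall>r'<r. j \<in> punctured_segments d ! r' \<longrightarrow> k \<in> punctured_segments d ! r'"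
    by blast
  have "segment_chain d ! i = {..j} - {k}"
    using jk(3) r by (simp add: segment_chain_def nth_append)
  moreover have "k \<in> segment_chain d ! i'" if "i' < i" "j \<in> segment_chain d ! i'" for i'
    using that jk r by (cases "i' < d - 1") (auto simp: segment_chain_def nth_append)
  ultimately have "j < d \<and> k < d \<and> j \<in> segment_chain d ! i \<and> k \<notin> segment_chain d ! i \<and>
    (\<forall>i'<i. j \<in> segment_chain d ! i' \<longrightarrow> k \<in> segment_chain d ! i')"
    using jk(1,2) by auto
  then show ?thesis by blast
qed

lemma segment_chain_separates:
  assumes "a < d" "b < d" "a \<noteq> b"
  shows "\<exists>i<length (segment_chain d). a \<in> segment_chain d ! i \<and> b \<notin> segment_chain d ! i"
proof (cases "a < b")
  case True
  with assms show ?thesis by (intro exI[of _ a]) (auto simp: segment_chain_def nth_append)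
next
  case False
  with assms obtain r where "r < length (punctured_segments d)"
    "a \<in> punctured_segments d ! r" "b \<notin> punctured_segments d ! r"
    using punctured_segments_separate[of b a d] by auto
  then show ?thesis
    by (intro exI[of _ "d - 1 + r"]) (auto simp: segment_chain_def nth_append)
qed

lemma separating_coordinate_chain:
  fixes l :: nat
  defines "l \<equiv> length (segment_chain CARD('n::finite))"
  obtains A :: "nat \<Rightarrow> 'n::finite set" where
    "\<And>j. j \<in> {1..<l} \<Longrightarrow> \<not> A (Suc j) \<times> - A (Suc j) \<subseteq> (\<Union>i\<in>{1..j}. A i \<times> - A i)"
    "(\<Union>i\<in>{1..l}. A i \<times> - A i) = - Id"
proof -
  let ?d = "CARD('n)" and ?L = "segment_chain CARD('n)"
  obtain pos :: "'n \<Rightarrow> nat" where pos: "bij_betw pos UNIV {..<?d}"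
    using ex_bij_betw_finite_nat[of "UNIV :: 'n set"] by (auto simp: atLeast0LessThan)
  then have pos_inj: "pos x = pos y \<longleftrightarrow> x = y" for x y
    by (auto simp: bij_betw_def inj_eq)
  have pos_surj: "\<exists>x. pos x = a" if "a < ?d" for a
    using pos that by (metis bij_betw_imp_surj_on imageE lessThan_iff)
  define A where "A i = pos -` (?L ! (i - 1))" for i
  show thesis
  proof
    fix j assume j: "j \<in> {1..<l}"
    with segment_chain_fresh[of j ?d] obtain a b where ab: "a < ?d" "b < ?d"
      "a \<in> ?L ! j" "b \<notin> ?L ! j" "\<forall>i'<j. a \<in> ?L ! i' \<longrightarrow> b \<in> ?L ! i'"
      by (auto simp: l_def)
    obtain x y where "pos x = a" "pos y = b" using ab pos_surj by metis
    with ab have "(x, y) \<in> A (Suc j) \<times> - A (Suc j)" "(x, y) \<notin> (\<Union>i\<in>{1..j}. A i \<times> - A i)"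
      by (auto simp: A_def)
    then show "\<not> A (Suc j) \<times> - A (Suc j) \<subseteq> (\<Union>i\<in>{1..j}. A i \<times> - A i)" by blast
  next
    have "\<exists>i\<in>{1..l}. x \<in> A i \<and> y \<notin> A i" if "x \<noteq> y" for x y
    proof -
      have "pos x < ?d" "pos y < ?d" using pos by (auto simp: bij_betw_def)
      with segment_chain_separates[of "pos x" ?d "pos y"] that pos_inj obtain i
        where "i < l" "pos x \<in> ?L ! i" "pos y \<notin> ?L ! i"
        by (auto simp: l_def)
      then show ?thesis by (intro bexI[of _ "Suc i"]) (auto simp: A_def)
    qed
    then show "(\<Union>i\<in>{1..l}. A i \<times> - A i) = - Id" by auto
  qed
qed

definition coord_subspace :: "'n set \<Rightarrow> ('a::zero ^ 'n) set" where
  "coord_subspace A = {x. \<forall>i. i \<notin> A \<longrightarrow> x $ i = 0}"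

definition GL_zero_pattern ::
    "('n \<times> 'n) set \<Rightarrow> (('p::prime_card mod_ring ^ 'n::finite) \<Rightarrow> ('p mod_ring ^ 'n)) set" where
  "GL_zero_pattern Z = {g \<in> GL_V. \<forall>j k. (j, k) \<in> Z \<longrightarrow> g (axis j 1) $ k = 0}"

definition transvection :: "'n \<Rightarrow> 'n \<Rightarrow> 'a::comm_ring_1 ^ 'n \<Rightarrow> 'a ^ 'n" where
  "transvection a b x = x + (x $ a) *s axis b 1"

lemma lin_subspace_coord_subspace: "lin_subspace (coord_subspace A)"
  by (auto simp: lin_subspace_def coord_subspace_def)

lemma lin_map_iff_linear: "lin_map f \<longleftrightarrow> Vector_Spaces.linear (*s) (*s) f"
  by (simp add: lin_map_def Vector_Spaces.linear_iff vec.vector_space_axioms)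

lemma lin_map_zero: "lin_map f \<Longrightarrow> f 0 = 0"
  by (simp add: lin_map_iff_linear vec.linear_0)

lemma setstab_GL_coord_subspace: "setstab_GL (coord_subspace A) = GL_zero_pattern (A \<times> - A)"
  (is "?S = ?Z")
proof (intro equalityI subsetI)
  fix g assume "g \<in> ?S"
  then have g: "g \<in> GL_V" "g ` coord_subspace A = coord_subspace A"
    by (simp_all add: setstab_GL_def)
  have "g (axis j 1) $ k = 0" if "j \<in> A" "k \<notin> A" for j k
  proof -
    have "axis j 1 \<in> coord_subspace A"
      using that(1) by (simp add: coord_subspace_def axis_def)
    then have "g (axis j 1) \<in> coord_subspace A" using g(2) by blast
    with that(2) show ?thesis by (simp add: coord_subspace_def)
  qed
  with g(1) show "g \<in> ?Z" by (auto simp: GL_zero_pattern_def)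
next
  fix g assume "g \<in> ?Z"
  then have "g \<in> GL_V" and zero: "\<And>j k. j \<in> A \<Longrightarrow> k \<notin> A \<Longrightarrow> g (axis j 1) $ k = 0"
    by (auto simp: GL_zero_pattern_def)
  then have "bij g" and lin: "Vector_Spaces.linear (*s) (*s) g"
    by (simp_all add: GL_V_def lin_map_iff_linear)
  have "g x \<in> coord_subspace A" if x: "x \<in> coord_subspace A" for x
  proof -
    have "g x $ k = 0" if "k \<notin> A" for k
    proof -
      have "x $ j * g (axis j 1) $ k = 0" for j
        using x zero[of j k] that by (cases "j \<in> A") (simp_all add: coord_subspace_def)
      then show ?thesis
        unfolding Cartesian_Space.linear_componentwise[OF lin, of x k] by (intro sum.neutral ballI)
    qed
    then show ?thesis by (simp add: coord_subspace_def)
  qed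
  then have "g ` coord_subspace A \<subseteq> coord_subspace A" by blast
  with \<open>bij g\<close> have "g ` coord_subspace A = coord_subspace A"
    by (meson bij_is_inj endo_inj_surj finite inj_on_subset subset_UNIV)
  with \<open>g \<in> GL_V\<close> show "g \<in> ?S" by (simp add: setstab_GL_def)
qed

lemma INT_GL_zero_pattern:
  "I \<noteq> {} \<Longrightarrow> (\<Inter>i\<in>I. GL_zero_pattern (Z i)) = GL_zero_pattern (\<Union>i\<in>I. Z i)"
  by (auto simp: GL_zero_pattern_def)

lemma transvection_in_GL_V:
  assumes "a \<noteq> b"
  shows "transvection a b \<in> GL_V"
proof -
  let ?inverse = "\<lambda>x. x - (x $ a) *s axis b 1"
  have "transvection a b \<circ> ?inverse = id" "?inverse \<circ> transvection a b = id"
    using assms by (auto simp: transvection_def fun_eq_iff vec_eq_iff axis_def)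
  then have "bij (transvection a b)" by (rule o_bij[rotated])
  moreover have "lin_map (transvection a b)"
    by (simp add: lin_map_def transvection_def vec_eq_iff algebra_simps)
  ultimately show ?thesis by (simp add: GL_V_def)
qed

lemma transvection_in_GL_zero_pattern_iff:
  assumes "a \<noteq> b" "Z \<inter> Id = {}"
  shows "transvection a b \<in> GL_zero_pattern Z \<longleftrightarrow> (a, b) \<notin> Z"
  using assms transvection_in_GL_V[OF assms(1)]
  by (auto simp: GL_zero_pattern_def transvection_def axis_def)

lemma GL_zero_pattern_psubset:
  assumes "Z \<subseteq> Z'" "Z' \<inter> Id = {}" "\<not> Z' \<subseteq> Z"
  shows "GL_zero_pattern Z' \<subset> GL_zero_pattern Z"
proof -
  from assms obtain a b where ab: "(a, b) \<in> Z'" "(a, b) \<notin> Z" "a \<noteq> b" by auto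
  with assms have "transvection a b \<in> GL_zero_pattern Z - GL_zero_pattern Z'"
    using transvection_in_GL_zero_pattern_iff[of a b] by blast
  moreover have "GL_zero_pattern Z' \<subseteq> GL_zero_pattern Z"
    using assms(1) by (auto simp: GL_zero_pattern_def)
  ultimately show ?thesis by blast
qed

lemma ex_scaled_axis_iff:
  "(\<exists>c. v = c *s axis j 1) \<longleftrightarrow> (\<forall>k. j \<noteq> k \<longrightarrow> v $ k = (0::'a::semiring_1))"
proof
  assume "\<forall>k. j \<noteq> k \<longrightarrow> v $ k = 0"
  then have "v = (v $ j) *s axis j 1" by (auto simp: vec_eq_iff axis_def)
  then show "\<exists>c. v = c *s axis j 1" ..
qed (auto simp: axis_def)

lemma GL_zero_pattern_off_diagonal: "GL_zero_pattern (- Id) = diag_T"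
  by (simp add: GL_zero_pattern_def diag_T_def ex_scaled_axis_iff)

lemma INT_setstab_GL_coord_subspace:
  "I \<noteq> {} \<Longrightarrow>
    (\<Inter>i\<in>I. setstab_GL (coord_subspace (A i))) = GL_zero_pattern (\<Union>i\<in>I. A i \<times> - A i)"
  by (simp add: setstab_GL_coord_subspace INT_GL_zero_pattern)

lemma INT_setstab_GL_coord_subspace_Suc_psubset:
  assumes "1 \<le> j" "\<not> A (Suc j) \<times> - A (Suc j) \<subseteq> (\<Union>i\<in>{1..j}. A i \<times> - A i)"
  shows "(\<Inter>i\<in>{1..Suc j}. setstab_GL (coord_subspace (A i)))
    \<subset> (\<Inter>i\<in>{1..j}. setstab_GL (coord_subspace (A i)))"
proof -
  have ne: "{1..j} \<noteq> {}" "{1..Suc j} \<noteq> {}" using assms(1) by auto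
  have "GL_zero_pattern (\<Union>i\<in>{1..Suc j}. A i \<times> - A i) \<subset> GL_zero_pattern (\<Union>i\<in>{1..j}. A i \<times> - A i)"
    using assms(2) by (intro GL_zero_pattern_psubset) (auto simp: atLeastAtMostSuc_conv)
  then show ?thesis
    unfolding INT_setstab_GL_coord_subspace[OF ne(1)] INT_setstab_GL_coord_subspace[OF ne(2)] .
qed

lemma GL_V_psubset_AGL_V: "GL_V \<subset> AGL_V" (is "?GL \<subset> ?AGL")
proof -
  have "?GL \<subseteq> ?AGL"
    unfolding AGL_V_def by force
  moreover have "(\<lambda>v. id v + axis i 1) \<in> ?AGL - ?GL" for i
  proof
    have "id \<in> ?GL" by (simp add: GL_V_def lin_map_def)
    then show "(\<lambda>v. id v + axis i 1) \<in> ?AGL" unfolding AGL_V_def by blast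
    show "(\<lambda>v. id v + axis i 1) \<notin> ?GL"
      using lin_map_zero[of "\<lambda>v. id v + axis i 1"] by (auto simp: GL_V_def)
  qed
  ultimately show ?thesis by blast
qed

lemma AGL_V_subset_Sym_V: "AGL_V \<subseteq> Sym_V" (is "?AGL \<subseteq> ?Sym")
proof
  fix f assume "f \<in> ?AGL"
  then obtain g u where "f = (\<lambda>x. x + u) \<circ> g" "bij g"
    by (auto simp: AGL_V_def GL_V_def comp_def)
  then show "f \<in> ?Sym" by (simp add: Sym_V_def bij_comp bij_plus_right)
qed

lemma two_neq_zero_mod_ring:
  assumes "odd CARD('p::prime_card)"
  shows "(2 :: 'p mod_ring) \<noteq> 0"
proof
  assume "(2 :: 'p mod_ring) = 0"
  then have "CARD('p) dvd 2"
    using of_nat_eq_0_iff_char_dvd[of 2, where ?'a = "'p mod_ring"] by simp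
  then have "CARD('p) \<le> 2" by (rule dvd_imp_le) simp
  with prime_gt_1_nat[OF prime_card[where ?'a = 'p]] have "CARD('p) = 2" by linarith
  with assms show False by simp
qed

lemma AGL_V_psubset_Sym_V:
  assumes "odd CARD('p::prime_card)" "2 \<le> CARD('n::finite)"
  shows "(AGL_V :: ('p mod_ring ^ 'n \<Rightarrow> 'p mod_ring ^ 'n) set) \<subset> Sym_V"
proof -
  obtain i j :: 'n where "i \<noteq> j"
    using assms(2) card_le_Suc0_iff_eq[of "UNIV :: 'n set"] by force
  define u v :: "'p mod_ring ^ 'n" where "u = axis i 1" and "v = axis j 1"
  let ?\<sigma> = "Transposition.transpose u v"
  have coords: "u $ i = 1" "v $ i = 0" "(2 *s u) $ i = 2" "(2 *s v) $ i = 0"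
    using \<open>i \<noteq> j\<close> by (simp_all add: u_def v_def axis_def)
  have "?\<sigma> \<notin> AGL_V"
  proof
    assume "?\<sigma> \<in> AGL_V"
    then obtain g w where \<sigma>: "?\<sigma> = (\<lambda>x. g x + w)" and "lin_map g"
      by (auto simp: AGL_V_def GL_V_def)
    then have g0: "g 0 = 0" and g2: "g (2 *s x) = 2 *s g x" for x
      by (simp_all add: lin_map_zero lin_map_def)
    have "u \<noteq> 0" "v \<noteq> 0" by (simp_all add: u_def v_def)
    then have "?\<sigma> 0 = 0" by simp
    with \<sigma> g0 have \<sigma>g: "?\<sigma> x = g x" for x by (simp add: fun_eq_iff)
    have two: "(2 :: 'p mod_ring) \<noteq> 0" by (rule two_neq_zero_mod_ring[OF assms(1)])
    then have "(2 :: 'p mod_ring) \<noteq> 1" by (metis add_cancel_right_right one_add_one)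
    with two coords have "2 *s u \<noteq> u" "2 *s u \<noteq> v" "2 *s u \<noteq> 2 *s v" by metis+
    then have "2 *s u = ?\<sigma> (2 *s u)" by simp
    also have "\<dots> = 2 *s g u" using \<sigma>g g2 by simp
    also have "\<dots> = 2 *s v" using \<sigma>g[of u] by simp
    finally show False using \<open>2 *s u \<noteq> 2 *s v\<close> by contradiction
  qed
  moreover have "?\<sigma> \<in> Sym_V" by (simp add: Sym_V_def)
  ultimately show ?thesis using AGL_V_subset_Sym_V by blast
qed

theorem lemma3p4:
  assumes "odd (CARD('p::prime_card))"
    and "CARD('n::finite) \<ge> 2"
  defines "l1 \<equiv> CARD('n) * (CARD('n) + 1) div 2 - 1"
  shows "\<exists>K :: nat \<Rightarrow> (('p mod_ring ^ 'n) \<Rightarrow> ('p mod_ring ^ 'n)) set.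
     (\<forall>i\<in>{1..l1}. \<exists>W. lin_subspace W \<and> K i = setstab_GL W) \<and>
     (AGL_V :: (('p mod_ring ^ 'n) \<Rightarrow> ('p mod_ring ^ 'n)) set) \<subset> Sym_V \<and>
     K 1 \<subset> AGL_V \<and>
     (\<forall>j\<in>{1..<l1}. (\<Inter>i\<in>{1..Suc j}. K i) \<subset> (\<Inter>i\<in>{1..j}. K i)) \<and>
     (\<Inter>i\<in>{1..l1}. K i) = diag_T"
proof -
  have l1: "l1 = length (segment_chain CARD('n))"
    using assms(2) by (simp add: l1_def length_segment_chain)
  with assms(2) have "1 \<le> l1" by (simp add: segment_chain_def)
  obtain A :: "nat \<Rightarrow> 'n set" where
    fresh: "\<And>j. j \<in> {1..<l1} \<Longrightarrow> \<not> A (Suc j) \<times> - A (Suc j) \<subseteq> (\<Union>i\<in>{1..j}. A i \<times> - A i)"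
    and covering: "(\<Union>i\<in>{1..l1}. A i \<times> - A i) = - Id"
    using separating_coordinate_chain[where 'n = 'n, folded l1] by blast
  show ?thesis
  proof (intro exI[of _ "\<lambda>i. setstab_GL (coord_subspace (A i))"] conjI ballI)
    show "\<exists>W. lin_subspace W \<and> setstab_GL (coord_subspace (A i)) = setstab_GL W" for i
      using lin_subspace_coord_subspace by blast
    show "(AGL_V :: ('p mod_ring ^ 'n \<Rightarrow> 'p mod_ring ^ 'n) set) \<subset> Sym_V"
      using AGL_V_psubset_Sym_V[OF assms(1,2)] .
    show "setstab_GL (coord_subspace (A 1)) \<subset> AGL_V"
      using GL_V_psubset_AGL_V by (auto simp: setstab_GL_def)
    show "(\<Inter>i\<in>{1..Suc j}. setstab_GL (coord_subspace (A i)))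
        \<subset> (\<Inter>i\<in>{1..j}. setstab_GL (coord_subspace (A i)))" if "j \<in> {1..<l1}" for j
      using INT_setstab_GL_coord_subspace_Suc_psubset[OF _ fresh[OF that]] that by simp
    show "(\<Inter>i\<in>{1..l1}. setstab_GL (coord_subspace (A i))) = diag_T"
      using \<open>1 \<le> l1\<close> covering
      by (simp add: INT_setstab_GL_coord_subspace GL_zero_pattern_off_diagonal)
  qed
qed

end
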